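(* Every $L_1$-embeddable diversity can be isometrically embedded in a measure diversity.
   Context: A diversity on a set $X$ is a function $\delta$ from finite subsets of $X$ to $\mathbb{R}$ with $\delta(A)\ge 0$, $\delta(A)=0$ whenever $|A|\le 1$ (values $0$ on larger sets are allowed), and $\delta(A\cup B)+\delta(B\cup C)\ge\delta(A\cup C)$ for all finite $A,B,C$ with $B\neq\emptyset$. For a measure space $(\Omega,\mathcal{A},\mu)$, the $L_1$ diversity is $(L_1(\Omega,\mu),\delta_1)$ with $\delta_1(F)=\int_\Omega\max\{|f(\omega)-g(\omega)|:f,g\in F\}\,d\mu(\omega)$ for finite $F$. A diversity $(X,\delta)$ is $L_1$-embeddable if there is a map $\phi$ from $X$ into some $L_1$ diversity with $\delta_1(\phi(A))=\delta(A)$ for all finite $A\subseteq X$ (an isometric embedding). Measure diversity: for a measure space $(M,\Sigma,\mu)$, the set is the collection of sets in $\Sigma$ of finite measure and $\delta(\{E_1,\dots,E_k\})=\mu(\bigcup_iE_i\setminus\bigcap_iE_i)$. *)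

theory Defs
  imports "HOL-Analysis.Analysis"
begin

definition is_diversity :: "'a set \<Rightarrow> ('a set \<Rightarrow> real) \<Rightarrow> bool" where
  "is_diversity X \<delta> \<longleftrightarrow>
     (\<forall>A. finite A \<and> A \<subseteq> X \<longrightarrow> \<delta> A \<ge> 0) \<and>
     (\<forall>A. finite A \<and> A \<subseteq> X \<and> card A \<le> 1 \<longrightarrow> \<delta> A = 0) \<and>
     (\<forall>A B C. finite A \<and> finite B \<and> finite C \<and> A \<subseteq> X \<and> B \<subseteq> X \<and> C \<subseteq> X \<and> B \<noteq> {}
        \<longrightarrow> \<delta> (A \<union> C) \<le> \<delta> (A \<union> B) + \<delta> (B \<union> C))"

definition L1_div :: "'b measure \<Rightarrow> ('b \<Rightarrow> real) set \<Rightarrow> real" where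
  "L1_div M F = (if F = {} then 0 else
     (\<integral>\<omega>. Max {\<bar>f \<omega> - g \<omega>\<bar> | f g. f \<in> F \<and> g \<in> F} \<partial>M))"

definition L1_isometric_embedding ::
  "'b measure \<Rightarrow> 'a set \<Rightarrow> ('a set \<Rightarrow> real) \<Rightarrow> ('a \<Rightarrow> 'b \<Rightarrow> real) \<Rightarrow> bool" where
  "L1_isometric_embedding M X \<delta> \<phi> \<longleftrightarrow>
     (\<forall>x\<in>X. integrable M (\<phi> x)) \<and>
     (\<forall>A. finite A \<and> A \<subseteq> X \<longrightarrow> L1_div M (\<phi> ` A) = \<delta> A)"

definition measure_div :: "'c measure \<Rightarrow> 'c set set \<Rightarrow> real" where
  "measure_div N \<E> = measure N (\<Union>\<E> - \<Inter>\<E>)"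

definition measure_div_isometric_embedding ::
  "'c measure \<Rightarrow> 'a set \<Rightarrow> ('a set \<Rightarrow> real) \<Rightarrow> ('a \<Rightarrow> 'c set) \<Rightarrow> bool" where
  "measure_div_isometric_embedding N X \<delta> \<psi> \<longleftrightarrow>
     (\<forall>x\<in>X. \<psi> x \<in> sets N \<and> emeasure N (\<psi> x) < \<infinity>) \<and>
     (\<forall>A. finite A \<and> A \<subseteq> X \<longrightarrow> measure_div N (\<psi> ` A) = \<delta> A)"

end

theory Submission imports Defs begin

text \<open>Represent a function f by the region between 0 and its graph in M \<times> \<real>. For a finite
  family of such regions, a point (\<omega>, t) lies in the union but not in the intersection exactly
  when t lies between the minimum and the maximum of the values f \<omega>, so the measure of
  union minus intersection is the integral of Max - Min, which is the L1 diversity of the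
  family. Hence composing an L1 embedding with f \<mapsto> its region gives an embedding into the
  measure diversity of M \<Otimes> lborel.\<close>

definition signed_region :: "'b measure \<Rightarrow> ('b \<Rightarrow> real) \<Rightarrow> ('b \<times> real) set" where
  "signed_region M f =
     {p \<in> space M \<times> UNIV. min 0 (f (fst p)) \<le> snd p \<and> snd p < max 0 (f (fst p))}"

lemma
  fixes g h :: "'b \<Rightarrow> real"
  assumes [measurable]: "g \<in> borel_measurable M" "h \<in> borel_measurable M"
  shows sets_pair_lborel_band:
      "{p \<in> space M \<times> UNIV. g (fst p) \<le> snd p \<and> snd p < h (fst p)} \<in> sets (M \<Otimes>\<^sub>M lborel)"
    and emeasure_pair_lborel_band:
      "emeasure (M \<Otimes>\<^sub>M lborel) {p \<in> space M \<times> UNIV. g (fst p) \<le> snd p \<and> snd p < h (fst p)}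
         = (\<integral>\<^sup>+\<omega>. ennreal (h \<omega> - g \<omega>) \<partial>M)"
proof -
  let ?B = "{p \<in> space M \<times> UNIV. g (fst p) \<le> snd p \<and> snd p < h (fst p)}"
  have "?B = {p \<in> space (M \<Otimes>\<^sub>M lborel). g (fst p) \<le> snd p \<and> snd p < h (fst p)}"
    by (simp add: space_pair_measure)
  also have "\<dots> \<in> sets (M \<Otimes>\<^sub>M lborel)"
    by measurable
  finally show B: "?B \<in> sets (M \<Otimes>\<^sub>M lborel)" .
  have "emeasure lborel (Pair \<omega> -` ?B) = ennreal (h \<omega> - g \<omega>)" if "\<omega> \<in> space M" for \<omega>
  proof -
    have slice: "Pair \<omega> -` ?B = {g \<omega>..<h \<omega>}"
      using that by auto
    show ?thesis
      unfolding slice by (cases "g \<omega> \<le> h \<omega>") (auto simp: ennreal_neg)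
  qed
  then show "emeasure (M \<Otimes>\<^sub>M lborel) ?B = (\<integral>\<^sup>+\<omega>. ennreal (h \<omega> - g \<omega>) \<partial>M)"
    by (simp add: lborel.emeasure_pair_measure_alt[OF B] cong: nn_integral_cong)
qed

lemma measure_pair_lborel_band:
  fixes g h :: "'b \<Rightarrow> real"
  assumes "g \<in> borel_measurable M" "h \<in> borel_measurable M"
    and "\<And>\<omega>. \<omega> \<in> space M \<Longrightarrow> g \<omega> \<le> h \<omega>"
  shows "measure (M \<Otimes>\<^sub>M lborel) {p \<in> space M \<times> UNIV. g (fst p) \<le> snd p \<and> snd p < h (fst p)}
         = (\<integral>\<omega>. h \<omega> - g \<omega> \<partial>M)"
  using assms
  by (simp add: measure_def emeasure_pair_lborel_band enn2real_nn_integral_eq_integral)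

lemma sets_signed_region:
  "f \<in> borel_measurable M \<Longrightarrow> signed_region M f \<in> sets (M \<Otimes>\<^sub>M lborel)"
  unfolding signed_region_def by (rule sets_pair_lborel_band) auto

lemma emeasure_signed_region:
  assumes "f \<in> borel_measurable M"
  shows "emeasure (M \<Otimes>\<^sub>M lborel) (signed_region M f) = (\<integral>\<^sup>+\<omega>. ennreal \<bar>f \<omega>\<bar> \<partial>M)"
proof -
  have "emeasure (M \<Otimes>\<^sub>M lborel) (signed_region M f)
      = (\<integral>\<^sup>+\<omega>. ennreal (max 0 (f \<omega>) - min 0 (f \<omega>)) \<partial>M)"
    unfolding signed_region_def using assms by (intro emeasure_pair_lborel_band) auto
  also have "\<dots> = (\<integral>\<^sup>+\<omega>. ennreal \<bar>f \<omega>\<bar> \<partial>M)"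
    by (rule nn_integral_cong) (auto simp: max_def min_def)
  finally show ?thesis .
qed

lemma emeasure_signed_region_finite:
  "integrable M f \<Longrightarrow> emeasure (M \<Otimes>\<^sub>M lborel) (signed_region M f) < \<infinity>"
  by (simp add: emeasure_signed_region integrable_iff_bounded)

lemma Union_minus_Inter_signed_region:
  fixes F :: "('b \<Rightarrow> real) set"
  assumes "finite F" "F \<noteq> {}"
  shows "\<Union>(signed_region M ` F) - \<Inter>(signed_region M ` F)
       = {p \<in> space M \<times> UNIV. Min ((\<lambda>f. f (fst p)) ` F) \<le> snd p
                             \<and> snd p < Max ((\<lambda>f. f (fst p)) ` F)}"
proof (intro set_eqI)
  fix p :: "'b \<times> real"
  obtain \<omega> t where p: "p = (\<omega>, t)" by force
  have mem: "(\<omega>, t) \<in> signed_region M f \<longleftrightarrow> \<omega> \<in> space M \<and> (if 0 \<le> t then t < f \<omega> else f \<omega> \<le> t)"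
    for f
    by (auto simp: signed_region_def)
  show "p \<in> \<Union>(signed_region M ` F) - \<Inter>(signed_region M ` F) \<longleftrightarrow>
        p \<in> {p \<in> space M \<times> UNIV. Min ((\<lambda>f. f (fst p)) ` F) \<le> snd p
                               \<and> snd p < Max ((\<lambda>f. f (fst p)) ` F)}"
    unfolding p using assms
    by (cases "0 \<le> t") (auto simp: mem Max_gr_iff Min_le_iff not_less; force)+
qed

lemma Max_abs_diff_eq_Max_minus_Min:
  fixes S :: "real set"
  assumes "finite S" "S \<noteq> {}"
  shows "Max {\<bar>a - b\<bar> | a b. a \<in> S \<and> b \<in> S} = Max S - Min S"
proof -
  let ?D = "{\<bar>a - b\<bar> | a b. a \<in> S \<and> b \<in> S}"
  have fin: "finite ?D"
    using assms(1) by (simp add: finite_image_set2)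
  have "Max S \<in> S" "Min S \<in> S"
    using assms by simp_all
  then have extremes: "\<bar>Max S - Min S\<bar> \<in> ?D"
    by blast
  show ?thesis
  proof (rule antisym)
    have "\<bar>a - b\<bar> \<le> Max S - Min S" if "a \<in> S" "b \<in> S" for a b
    proof -
      have "a \<le> Max S" "b \<le> Max S" "Min S \<le> a" "Min S \<le> b"
        using that assms(1) by auto
      then show ?thesis
        by (simp add: abs_le_iff)
    qed
    then show "Max ?D \<le> Max S - Min S"
      using fin extremes by (intro Max.boundedI) blast+
    show "Max S - Min S \<le> Max ?D"
      using Max_ge[OF fin extremes] by simp
  qed
qed

lemma L1_div_eq_integral_Max_minus_Min:
  assumes "finite F" "F \<noteq> {}"
  shows "L1_div M F = (\<integral>\<omega>. Max ((\<lambda>f. f \<omega>) ` F) - Min ((\<lambda>f. f \<omega>) ` F) \<partial>M)"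
proof -
  have "{\<bar>f \<omega> - g \<omega>\<bar> | f g. f \<in> F \<and> g \<in> F}
      = {\<bar>a - b\<bar> | a b. a \<in> (\<lambda>f. f \<omega>) ` F \<and> b \<in> (\<lambda>f. f \<omega>) ` F}" for \<omega>
    by blast
  then show ?thesis
    using assms by (simp add: L1_div_def Max_abs_diff_eq_Max_minus_Min)
qed

lemma measure_div_signed_region:
  fixes F :: "('b \<Rightarrow> real) set"
  assumes "finite F" "\<And>f. f \<in> F \<Longrightarrow> f \<in> borel_measurable M"
  shows "measure_div (M \<Otimes>\<^sub>M lborel) (signed_region M ` F) = L1_div M F"
proof (cases "F = {}")
  case True
  then show ?thesis
    by (simp add: measure_div_def L1_div_def)
next
  case False
  have [measurable]: "(\<lambda>\<omega>. Min ((\<lambda>f. f \<omega>) ` F)) \<in> borel_measurable M"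
                     "(\<lambda>\<omega>. Max ((\<lambda>f. f \<omega>) ` F)) \<in> borel_measurable M"
    using assms by measurable
  have "Min ((\<lambda>f. f \<omega>) ` F) \<le> Max ((\<lambda>f. f \<omega>) ` F)" for \<omega>
    using assms(1) False by (simp add: Min_le_iff ex_in_conv[symmetric])
  then have "measure (M \<Otimes>\<^sub>M lborel) {p \<in> space M \<times> UNIV.
                Min ((\<lambda>f. f (fst p)) ` F) \<le> snd p \<and> snd p < Max ((\<lambda>f. f (fst p)) ` F)}
           = (\<integral>\<omega>. Max ((\<lambda>f. f \<omega>) ` F) - Min ((\<lambda>f. f \<omega>) ` F) \<partial>M)"
    by (intro measure_pair_lborel_band) simp_all
  then show ?thesis
    using assms(1) False
    by (simp add: measure_div_def Union_minus_Inter_signed_region L1_div_eq_integral_Max_minus_Min)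
qed

theorem proposition8:
  fixes X :: "'a set" and \<delta> :: "'a set \<Rightarrow> real"
    and M :: "'b measure" and \<phi> :: "'a \<Rightarrow> 'b \<Rightarrow> real"
  assumes "is_diversity X \<delta>"
    and "L1_isometric_embedding M X \<delta> \<phi>"
  shows "\<exists>(N :: ('b \<times> real) measure) \<psi>. measure_div_isometric_embedding N X \<delta> \<psi>"
proof -
  have int: "\<And>x. x \<in> X \<Longrightarrow> integrable M (\<phi> x)"
    and L1: "\<And>A. finite A \<Longrightarrow> A \<subseteq> X \<Longrightarrow> L1_div M (\<phi> ` A) = \<delta> A"
    using assms(2) unfolding L1_isometric_embedding_def by auto
  have "measure_div (M \<Otimes>\<^sub>M lborel) (signed_region M ` \<phi> ` A) = \<delta> A"
    if "finite A" "A \<subseteq> X" for A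
    using that int by (subst measure_div_signed_region) (auto simp: L1)
  moreover have "signed_region M (\<phi> x) \<in> sets (M \<Otimes>\<^sub>M lborel)" if "x \<in> X" for x
    using int[OF that] by (intro sets_signed_region) simp
  moreover have "emeasure (M \<Otimes>\<^sub>M lborel) (signed_region M (\<phi> x)) < \<infinity>" if "x \<in> X" for x
    using int[OF that] by (rule emeasure_signed_region_finite)
  ultimately have "measure_div_isometric_embedding (M \<Otimes>\<^sub>M lborel) X \<delta> (signed_region M \<circ> \<phi>)"
    by (simp add: measure_div_isometric_embedding_def image_comp)
  then show ?thesis
    by blast
qed

end
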